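(* Let $(Y,D)$ be a pair of binary random variables with probability mass function $q_{ij}=\mathbb P(Y=i,D=j)$, $i,j\in\{0,1\}$. Then the following hold. (1) (Validity.) Suppose $(Y_0,Y_1)$ is a pair of $\{0,1\}$-valued random variables defined jointly with $(Y,D)$ such that $(Y,D,Y_0,Y_1)$ satisfies the binary Roy model, or such that there exist real random variables $(Y_0^\ast,Y_1^\ast)$ with $(Y,D,Y_0^\ast,Y_1^\ast)$ satisfying the alternative binary Roy model with $Y_d=1\{Y_d^\ast>0\}$. Then $$0\le \mathbb P(Y_0=1,Y_1=0)\le q_{10},\qquad 0\le \mathbb P(Y_0=0,Y_1=1)\le q_{11},\qquad \mathbb P(Y_0=0,Y_1=0)=q_{00}+q_{01}.$$ (2) (Sharpness.) Conversely, if $(p_{00},p_{01},p_{10})\in\mathbb R^3$ satisfies $0\le p_{10}\le q_{10}$, $0\le p_{01}\le q_{11}$ and $p_{00}=q_{00}+q_{01}$, then there exist, on some probability space, random variables $(\tilde Y,\tilde D,Y_0,Y_1)$ with $(\tilde Y,\tilde D)$ having the same distribution as $(Y,D)$, $Y_0,Y_1\in\{0,1\}$, such that $(\tilde Y,\tilde D,Y_0,Y_1)$ satisfies the binary Roy model (and hence also the alternative binary Roy model, with $Y_d^\ast=Y_d$) and $\mathbb P(Y_0=0,Y_1=0)=p_{00}$, $\mathbb P(Y_0=0,Y_1=1)=p_{01}$, $\mathbb P(Y_0=1,Y_1=0)=p_{10}$.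
   Context: All random variables are defined on a common probability space. The observed variables are an outcome $Y$ and a sector indicator $D\in\{0,1\}$; $(Y_0,Y_1)$ are unobserved potential outcomes. Binary Roy model: $Y_0,Y_1\in\{0,1\}$, $Y=Y_1D+Y_0(1-D)$, and almost surely $Y_1>Y_0\Rightarrow D=1$ and $Y_1<Y_0\Rightarrow D=0$ (nothing is assumed about $D$ when $Y_1=Y_0$). Alternative binary Roy model: $Y=Y_1D+Y_0(1-D)$ where $Y_d=1\{Y_d^\ast>0\}$ for $d=0,1$, for a pair of real random variables $(Y_0^\ast,Y_1^\ast)$ (possibly dependent), and almost surely $Y_1^\ast>Y_0^\ast\Rightarrow D=1$ and $Y_1^\ast<Y_0^\ast\Rightarrow D=0$. *)

theory Defs
  imports "HOL-Probability.Probability"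
begin

definition binary_rv :: "'a measure \<Rightarrow> ('a \<Rightarrow> nat) \<Rightarrow> bool" where
  "binary_rv M X \<longleftrightarrow> X \<in> measurable M (count_space UNIV) \<and> (\<forall>x\<in>space M. X x \<in> {0,1})"

definition binary_roy ::
  "'a measure \<Rightarrow> ('a \<Rightarrow> nat) \<Rightarrow> ('a \<Rightarrow> nat) \<Rightarrow> ('a \<Rightarrow> nat) \<Rightarrow> ('a \<Rightarrow> nat) \<Rightarrow> bool" where
  "binary_roy M Y D Y0 Y1 \<longleftrightarrow>
     binary_rv M Y0 \<and> binary_rv M Y1 \<and>
     (\<forall>x\<in>space M. Y x = Y1 x * D x + Y0 x * (1 - D x)) \<and>
     (AE x in M. Y1 x > Y0 x \<longrightarrow> D x = 1) \<and>
     (AE x in M. Y1 x < Y0 x \<longrightarrow> D x = 0)"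

definition alt_binary_roy ::
  "'a measure \<Rightarrow> ('a \<Rightarrow> nat) \<Rightarrow> ('a \<Rightarrow> nat) \<Rightarrow> ('a \<Rightarrow> real) \<Rightarrow> ('a \<Rightarrow> real) \<Rightarrow> bool" where
  "alt_binary_roy M Y D Y0s Y1s \<longleftrightarrow>
     Y0s \<in> borel_measurable M \<and> Y1s \<in> borel_measurable M \<and>
     (\<forall>x\<in>space M. Y x = (if Y1s x > 0 then 1 else 0) * D x
                        + (if Y0s x > 0 then 1 else 0) * (1 - D x)) \<and>
     (AE x in M. Y1s x > Y0s x \<longrightarrow> D x = 1) \<and>
     (AE x in M. Y1s x < Y0s x \<longrightarrow> D x = 0)"

definition qpmf :: "'a measure \<Rightarrow> ('a \<Rightarrow> nat) \<Rightarrow> ('a \<Rightarrow> nat) \<Rightarrow> nat \<Rightarrow> nat \<Rightarrow> real" where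
  "qpmf M Y D i j = measure M {x\<in>space M. Y x = i \<and> D x = j}"

end

theory Submission
  imports Defs
begin

text \<open>In a binary Roy model, \<open>Y0 = 1, Y1 = 0\<close> forces the choice \<open>D = 0\<close> and hence \<open>Y = 1\<close>;
  symmetrically \<open>Y0 = 0, Y1 = 1\<close> forces \<open>D = 1, Y = 1\<close>; and \<open>Y = 0\<close> happens exactly when both
  potential outcomes vanish, since the other sector cannot be strictly better than the chosen one. Conversely, split the mass \<open>q10\<close> of \<open>{Y = 1, D = 0}\<close> into
  \<open>p10\<close> with \<open>Y1 = 0\<close> and the rest with \<open>Y1 = 1\<close>, and \<open>q11\<close> likewise into \<open>p01\<close> with \<open>Y0 = 0\<close>
  and the rest with \<open>Y0 = 1\<close>: the resulting six-point law of \<open>(Y, D, Y0, Y1)\<close> is a Roy model with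
  the prescribed law of \<open>(Y0, Y1)\<close>.\<close>

lemma binary_roy_if_alt_binary_roy:
  assumes "binary_rv M Y0" "binary_rv M Y1" "alt_binary_roy M Y D Y0s Y1s"
    and thresholds: "\<forall>x\<in>space M. Y0 x = (if Y0s x > 0 then 1 else 0) \<and> Y1 x = (if Y1s x > 0 then 1 else 0)"
  shows "binary_roy M Y D Y0 Y1"
proof -
  have "AE x in M. Y1s x > Y0s x \<longrightarrow> D x = 1" "AE x in M. Y1s x < Y0s x \<longrightarrow> D x = 0"
    using assms(3) by (auto simp: alt_binary_roy_def)
  moreover have "AE x in M. Y1 x > Y0 x \<longrightarrow> Y1s x > Y0s x" "AE x in M. Y1 x < Y0 x \<longrightarrow> Y1s x < Y0s x"
    using thresholds by (auto intro!: AE_I2 split: if_splits)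
  ultimately have "AE x in M. Y1 x > Y0 x \<longrightarrow> D x = 1" "AE x in M. Y1 x < Y0 x \<longrightarrow> D x = 0"
    by (auto elim: AE_mp)
  then show ?thesis
    using assms by (auto simp: binary_roy_def alt_binary_roy_def)
qed

lemma binary_roy_AE_potential_outcomes:
  assumes "binary_roy M Y D Y0 Y1"
  shows "AE x in M. (Y0 x = 1 \<and> Y1 x = 0 \<longrightarrow> Y x = 1 \<and> D x = 0)
                  \<and> (Y0 x = 0 \<and> Y1 x = 1 \<longrightarrow> Y x = 1 \<and> D x = 1)
                  \<and> (Y0 x = 0 \<and> Y1 x = 0 \<longleftrightarrow> Y x = 0)"
proof -
  have "AE x in M. (Y1 x > Y0 x \<longrightarrow> D x = 1) \<and> (Y1 x < Y0 x \<longrightarrow> D x = 0)"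
    using assms by (auto simp: binary_roy_def)
  then show ?thesis
  proof (rule AE_mp, intro AE_I2 impI)
    fix x assume "x \<in> space M" and "(Y1 x > Y0 x \<longrightarrow> D x = 1) \<and> (Y1 x < Y0 x \<longrightarrow> D x = 0)"
    moreover have "Y0 x \<in> {0,1}" "Y1 x \<in> {0,1}" "Y x = Y1 x * D x + Y0 x * (1 - D x)"
      using assms \<open>x \<in> space M\<close> by (auto simp: binary_roy_def binary_rv_def)
    ultimately show "(Y0 x = 1 \<and> Y1 x = 0 \<longrightarrow> Y x = 1 \<and> D x = 0)
                  \<and> (Y0 x = 0 \<and> Y1 x = 1 \<longrightarrow> Y x = 1 \<and> D x = 1)
                  \<and> (Y0 x = 0 \<and> Y1 x = 0 \<longleftrightarrow> Y x = 0)"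
      by auto
  qed
qed

lemma (in finite_measure) finite_measure_mono_AE:
  assumes "AE x in M. x \<in> A \<longrightarrow> x \<in> B" and "B \<in> sets M"
  shows "measure M A \<le> measure M B"
  using emeasure_mono_AE[OF assms] assms(2)
  by (simp add: measure_def enn2real_mono less_top[symmetric])

lemma (in finite_measure) measure_eq_qpmf_sum:
  assumes "Y \<in> measurable M (count_space UNIV)" and "binary_rv M D"
  shows "measure M {x\<in>space M. Y x = i} = qpmf M Y D i 0 + qpmf M Y D i 1"
proof -
  have [measurable]: "D \<in> measurable M (count_space UNIV)"
    using assms(2) by (simp add: binary_rv_def)
  have "{x\<in>space M. Y x = i} = {x\<in>space M. Y x = i \<and> D x = 0} \<union> {x\<in>space M. Y x = i \<and> D x = 1}"
    using assms(2) by (auto simp: binary_rv_def)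
  then show ?thesis
    unfolding qpmf_def using assms(1) by (auto intro: finite_measure_Union)
qed

lemma (in prob_space) binary_roy_potential_outcome_bounds:
  assumes "binary_rv M Y" "binary_rv M D" "binary_roy M Y D Y0 Y1"
  shows "measure M {x\<in>space M. Y0 x = 1 \<and> Y1 x = 0} \<le> qpmf M Y D 1 0"
    and "measure M {x\<in>space M. Y0 x = 0 \<and> Y1 x = 1} \<le> qpmf M Y D 1 1"
    and "measure M {x\<in>space M. Y0 x = 0 \<and> Y1 x = 0} = qpmf M Y D 0 0 + qpmf M Y D 0 1"
proof -
  have [measurable]: "Y \<in> measurable M (count_space UNIV)" "D \<in> measurable M (count_space UNIV)"
    "Y0 \<in> measurable M (count_space UNIV)" "Y1 \<in> measurable M (count_space UNIV)"
    using assms by (auto simp: binary_rv_def binary_roy_def)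
  note AE_outcomes = binary_roy_AE_potential_outcomes[OF assms(3)]
  show "measure M {x\<in>space M. Y0 x = 1 \<and> Y1 x = 0} \<le> qpmf M Y D 1 0"
    unfolding qpmf_def by (intro finite_measure_mono_AE AE_mp[OF AE_outcomes AE_I2]) auto
  show "measure M {x\<in>space M. Y0 x = 0 \<and> Y1 x = 1} \<le> qpmf M Y D 1 1"
    unfolding qpmf_def by (intro finite_measure_mono_AE AE_mp[OF AE_outcomes AE_I2]) auto
  have "measure M {x\<in>space M. Y0 x = 0 \<and> Y1 x = 0} = measure M {x\<in>space M. Y x = 0}"
    by (intro measure_eq_AE AE_mp[OF AE_outcomes AE_I2]) auto
  also have "\<dots> = qpmf M Y D 0 0 + qpmf M Y D 0 1"
    using assms(2) by (rule measure_eq_qpmf_sum[rotated]) measurable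
  finally show "measure M {x\<in>space M. Y0 x = 0 \<and> Y1 x = 0} = qpmf M Y D 0 0 + qpmf M Y D 0 1" .
qed

lemma qpmf_eq_0_if_not_binary:
  assumes "binary_rv M Y" "binary_rv M D" "i \<notin> {0,1} \<or> j \<notin> {0,1}"
  shows "qpmf M Y D i j = 0"
proof -
  have empty: "{x\<in>space M. Y x = i \<and> D x = j} = {}"
    using assms by (auto simp: binary_rv_def)
  show ?thesis
    unfolding qpmf_def empty by simp
qed

lemma (in prob_space) qpmf_sum_eq_1:
  assumes "binary_rv M Y" "binary_rv M D"
  shows "qpmf M Y D 0 0 + qpmf M Y D 0 1 + qpmf M Y D 1 0 + qpmf M Y D 1 1 = 1"
proof -
  have Y[measurable]: "Y \<in> measurable M (count_space UNIV)"
    using assms by (simp add: binary_rv_def)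
  have "space M = {x\<in>space M. Y x = 0} \<union> {x\<in>space M. Y x = 1}"
    using assms by (auto simp: binary_rv_def)
  then have "1 = measure M ({x\<in>space M. Y x = 0} \<union> {x\<in>space M. Y x = 1})"
    using prob_space by simp
  also have "\<dots> = measure M {x\<in>space M. Y x = 0} + measure M {x\<in>space M. Y x = 1}"
    by (rule finite_measure_Union) auto
  finally show ?thesis
    using measure_eq_qpmf_sum[OF Y assms(2)] by simp
qed

lemma distr_pair_eq_if_qpmf_eq:
  assumes "finite_measure M" "finite_measure N"
    and "binary_rv M Y" "binary_rv M D" "binary_rv N Y'" "binary_rv N D'"
    and "\<And>i j. i \<in> {0,1} \<Longrightarrow> j \<in> {0,1} \<Longrightarrow> qpmf N Y' D' i j = qpmf M Y D i j"
  shows "distr N (count_space UNIV) (\<lambda>x. (Y' x, D' x)) = distr M (count_space UNIV) (\<lambda>x. (Y x, D x))"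
proof (rule measure_eqI_countable[where A = UNIV])
  fix a :: "nat \<times> nat"
  obtain i j where a: "a = (i, j)" by (cases a)
  have "qpmf N Y' D' i j = qpmf M Y D i j"
  proof (cases "i \<in> {0,1} \<and> j \<in> {0,1}")
    case False
    then show ?thesis
      using assms(3-6) by (simp add: qpmf_eq_0_if_not_binary)
  qed (use assms(7) in simp)
  moreover have "(\<lambda>x. (Y x, D x)) \<in> measurable M (count_space UNIV)"
    "(\<lambda>x. (Y' x, D' x)) \<in> measurable N (count_space UNIV)"
    using assms by (auto simp: binary_rv_def)
  ultimately show "emeasure (distr N (count_space UNIV) (\<lambda>x. (Y' x, D' x))) {a}
                 = emeasure (distr M (count_space UNIV) (\<lambda>x. (Y x, D x))) {a}"
    using assms(1,2)
    by (simp add: emeasure_distr finite_measure.emeasure_eq_measure qpmf_def a vimage_def Int_def conj_commute)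
qed auto

lemma (in prob_space) binary_roy_sharp:
  assumes "binary_rv M Y" "binary_rv M D"
    and "0 \<le> p10" "p10 \<le> qpmf M Y D 1 0" "0 \<le> p01" "p01 \<le> qpmf M Y D 1 1"
  shows "\<exists>(N :: (nat \<times> nat \<times> nat \<times> nat) measure) Yt Dt Y0 Y1.
        prob_space N \<and> binary_rv N Yt \<and> binary_rv N Dt \<and>
        distr N (count_space UNIV) (\<lambda>x. (Yt x, Dt x)) = distr M (count_space UNIV) (\<lambda>x. (Y x, D x)) \<and>
        binary_roy N Yt Dt Y0 Y1 \<and>
        alt_binary_roy N Yt Dt (\<lambda>x. real (Y0 x)) (\<lambda>x. real (Y1 x)) \<and>
        measure N {x\<in>space N. Y0 x = 0 \<and> Y1 x = 0} = qpmf M Y D 0 0 + qpmf M Y D 0 1 \<and>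
        measure N {x\<in>space N. Y0 x = 0 \<and> Y1 x = 1} = p01 \<and>
        measure N {x\<in>space N. Y0 x = 1 \<and> Y1 x = 0} = p10"
proof -
  define q where "q = qpmf M Y D"
  define xs :: "((nat \<times> nat \<times> nat \<times> nat) \<times> real) list" where
    "xs = [((0,0,0,0), q 0 0), ((0,1,0,0), q 0 1),
           ((1,0,1,0), p10), ((1,0,1,1), q 1 0 - p10),
           ((1,1,0,1), p01), ((1,1,1,1), q 1 1 - p01)]"
  have wf: "pmf_of_list_wf xs"
    using assms qpmf_sum_eq_1[OF assms(1,2)]
    by (intro pmf_of_list_wfI) (auto simp: xs_def q_def qpmf_def)
  define N where "N = measure_pmf (pmf_of_list xs)"
  \<comment> \<open>Outcomes are \<open>(y, d, y0, y1)\<close>; coordinates are clipped to \<open>{0,1}\<close> so that the variables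
    are binary on all of \<open>space N = UNIV\<close>, not only on the support.\<close>
  define Dt :: "nat \<times> nat \<times> nat \<times> nat \<Rightarrow> nat" where "Dt x = min 1 (fst (snd x))" for x
  define Y0 :: "nat \<times> nat \<times> nat \<times> nat \<Rightarrow> nat" where "Y0 x = min 1 (fst (snd (snd x)))" for x
  define Y1 :: "nat \<times> nat \<times> nat \<times> nat \<Rightarrow> nat" where "Y1 x = min 1 (snd (snd (snd x)))" for x
  define Yt where "Yt x = Y1 x * Dt x + Y0 x * (1 - Dt x)" for x
  have space_N: "space N = UNIV"
    by (simp add: N_def)
  have measure_N: "measure N A = sum_list (map snd (filter (\<lambda>x. fst x \<in> A) xs))" for A
    unfolding N_def using wf by (rule measure_pmf_of_list)
  have AE_N: "AE x in N. P x" if "\<And>x. x \<in> fst ` set xs \<Longrightarrow> P x" for P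
    unfolding N_def AE_measure_pmf_iff using set_pmf_of_list[OF wf] that by force
  have bits: "Dt x \<in> {0,1}" "Y0 x \<in> {0,1}" "Y1 x \<in> {0,1}" for x
    by (auto simp: Dt_def Y0_def Y1_def min_def)
  moreover have "Yt x \<in> {0,1}" for x
    using bits[of x] unfolding Yt_def by auto
  ultimately have binary_Dt: "binary_rv N Dt" and binary_Y0: "binary_rv N Y0"
    and binary_Y1: "binary_rv N Y1" and binary_Yt: "binary_rv N Yt"
    by (simp_all add: binary_rv_def N_def)
  have roy: "binary_roy N Yt Dt Y0 Y1"
    unfolding binary_roy_def using binary_Y0 binary_Y1
    by (auto intro!: AE_N simp: Yt_def xs_def Dt_def Y0_def Y1_def)
  have alt_roy: "alt_binary_roy N Yt Dt (\<lambda>x. real (Y0 x)) (\<lambda>x. real (Y1 x))"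
    unfolding alt_binary_roy_def using binary_Y0 binary_Y1
    by (auto intro!: AE_N simp: Yt_def xs_def Dt_def Y0_def Y1_def N_def binary_rv_def)
  have "qpmf N Yt Dt i j = q i j" if "i \<in> {0,1}" "j \<in> {0,1}" for i j
    using that by (auto simp: qpmf_def measure_N space_N xs_def Yt_def Dt_def Y0_def Y1_def)
  then have distr_eq: "distr N (count_space UNIV) (\<lambda>x. (Yt x, Dt x)) = distr M (count_space UNIV) (\<lambda>x. (Y x, D x))"
    by (intro distr_pair_eq_if_qpmf_eq binary_Yt binary_Dt assms)
       (auto simp: q_def N_def finite_measure_axioms measure_pmf.finite_measure_axioms)
  have "measure N {x\<in>space N. Y0 x = 0 \<and> Y1 x = 0} = q 0 0 + q 0 1"
    "measure N {x\<in>space N. Y0 x = 0 \<and> Y1 x = 1} = p01"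
    "measure N {x\<in>space N. Y0 x = 1 \<and> Y1 x = 0} = p10"
    by (simp_all add: measure_N space_N xs_def Y0_def Y1_def)
  then show ?thesis
    using roy alt_roy distr_eq binary_Yt binary_Dt
    by (intro exI[of _ N] exI[of _ Yt] exI[of _ Dt] exI[of _ Y0] exI[of _ Y1])
       (simp add: N_def q_def measure_pmf.prob_space_axioms)
qed

theorem theorem1:
  fixes M :: "'a measure" and Y D :: "'a \<Rightarrow> nat"
  assumes "prob_space M"
    and "binary_rv M Y" and "binary_rv M D"
  shows
   "(\<forall>Y0 Y1. binary_rv M Y0 \<and> binary_rv M Y1 \<and>
       (binary_roy M Y D Y0 Y1 \<or>
        (\<exists>Y0s Y1s. alt_binary_roy M Y D Y0s Y1s \<and>
           (\<forall>x\<in>space M. Y0 x = (if Y0s x > 0 then 1 else 0) \<and>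
                         Y1 x = (if Y1s x > 0 then 1 else 0))))
     \<longrightarrow> 0 \<le> measure M {x\<in>space M. Y0 x = 1 \<and> Y1 x = 0}
       \<and> measure M {x\<in>space M. Y0 x = 1 \<and> Y1 x = 0} \<le> qpmf M Y D 1 0
       \<and> 0 \<le> measure M {x\<in>space M. Y0 x = 0 \<and> Y1 x = 1}
       \<and> measure M {x\<in>space M. Y0 x = 0 \<and> Y1 x = 1} \<le> qpmf M Y D 1 1
       \<and> measure M {x\<in>space M. Y0 x = 0 \<and> Y1 x = 0} = qpmf M Y D 0 0 + qpmf M Y D 0 1)
  \<and>
   (\<forall>p00 p01 p10 :: real.
       0 \<le> p10 \<and> p10 \<le> qpmf M Y D 1 0 \<and> 0 \<le> p01 \<and> p01 \<le> qpmf M Y D 1 1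
       \<and> p00 = qpmf M Y D 0 0 + qpmf M Y D 0 1 \<longrightarrow>
     (\<exists>(N :: (nat \<times> nat \<times> nat \<times> nat) measure) Yt Dt Y0 Y1.
        prob_space N \<and> binary_rv N Yt \<and> binary_rv N Dt \<and>
        distr N (count_space UNIV) (\<lambda>x. (Yt x, Dt x)) = distr M (count_space UNIV) (\<lambda>x. (Y x, D x)) \<and>
        binary_roy N Yt Dt Y0 Y1 \<and>
        alt_binary_roy N Yt Dt (\<lambda>x. real (Y0 x)) (\<lambda>x. real (Y1 x)) \<and>
        measure N {x\<in>space N. Y0 x = 0 \<and> Y1 x = 0} = p00 \<and>
        measure N {x\<in>space N. Y0 x = 0 \<and> Y1 x = 1} = p01 \<and>
        measure N {x\<in>space N. Y0 x = 1 \<and> Y1 x = 0} = p10))"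
proof -
  interpret prob_space M by (fact assms(1))
  have roy: "binary_roy M Y D Y0 Y1"
    if "binary_roy M Y D Y0 Y1 \<or> (\<exists>Y0s Y1s. alt_binary_roy M Y D Y0s Y1s \<and>
           (\<forall>x\<in>space M. Y0 x = (if Y0s x > 0 then 1 else 0) \<and> Y1 x = (if Y1s x > 0 then 1 else 0)))"
      and "binary_rv M Y0" "binary_rv M Y1" for Y0 Y1
    using that binary_roy_if_alt_binary_roy by blast
  show ?thesis
    using binary_roy_potential_outcome_bounds[OF assms(2,3) roy] binary_roy_sharp[OF assms(2,3)]
    by auto
qed

end
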